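(* Let $H\in(\tfrac12,1)$. For each integer $n>1$ there exists a unique $x_n\in(0,n-1)$ such that the function $g_n(x)=x^{\frac12-H}\phi_n^H(x)$ is strictly decreasing on $(0,x_n)$ and strictly increasing on $(x_n,n-1)$. Moreover $\lim_{n\to\infty}\frac{x_n}{n-1}=H-\frac12$.
   Context: $\phi_n^H(x)=(n-x)^{H-\frac12}-(n-1-x)^{H-\frac12}$ for $x\in(0,n-1)$; $g_n:(0,n-1)\to(0,\infty)$. *)

theory Defs
  imports "HOL-Analysis.Analysis"
begin

definition phiH :: "real \<Rightarrow> nat \<Rightarrow> real \<Rightarrow> real" where
  "phiH H n x = (real n - x) powr (H - 1/2) - (real n - 1 - x) powr (H - 1/2)"

definition gH :: "real \<Rightarrow> nat \<Rightarrow> real \<Rightarrow> real" where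
  "gH H n x = x powr (1/2 - H) * phiH H n x"

definition turning_point :: "real \<Rightarrow> nat \<Rightarrow> real \<Rightarrow> bool" where
  "turning_point H n x \<longleftrightarrow> x \<in> {0<..<real n - 1} \<and>
     strict_antimono_on {0<..<x} (gH H n) \<and>
     strict_mono_on {x<..<real n - 1} (gH H n)"

end

theory Submission
  imports Defs
begin

text \<open>Write \<open>a = H - 1/2 \<in> (0, 1/2)\<close>. Then \<open>g\<^sub>n'(x) = a x\<^sup>-\<^sup>a\<^sup>-\<^sup>1 h(x)\<close> with
  \<open>h(x) = x ((n-1-x)\<^sup>a\<^sup>-\<^sup>1 - (n-x)\<^sup>a\<^sup>-\<^sup>1) - ((n-x)\<^sup>a - (n-1-x)\<^sup>a)\<close>.
  The function \<open>h\<close> is strictly increasing on \<open>[0, n-1)\<close>, negative at \<open>0\<close> and positive close to \<open>n-1\<close>,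
  so its unique zero is the unique turning point \<open>x\<^sub>n\<close> of \<open>g\<^sub>n\<close>. Bounding both power differences by the
  mean value theorem, \<open>h((a - \<epsilon>)(n-1)) < 0 < h((a + \<epsilon>)(n-1))\<close> for large \<open>n\<close>, which traps \<open>x\<^sub>n/(n-1)\<close>
  in \<open>(a - \<epsilon>, a + \<epsilon>)\<close>.\<close>

lemma powr_diff_mean_value:
  fixes u v r :: real
  assumes "0 < u" "u < v"
  shows "\<exists>z. u < z \<and> z < v \<and> v powr r - u powr r = (v - u) * (r * z powr (r - 1))"
proof -
  have deriv: "((\<lambda>s. s powr r) has_real_derivative r * s powr (r - 1)) (at s)" if "0 < s" for s
    using that by (rule has_real_derivative_powr)
  have "continuous_on {u..v} (\<lambda>s. s powr r)"
    using assms by (intro continuous_on_powr') (auto intro: continuous_intros)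
  moreover have "(\<lambda>s. s powr r) differentiable (at s)" if "u < s" for s
    using deriv[of s] that assms real_differentiable_def by auto
  ultimately obtain l z where z: "u < z" "z < v" "DERIV (\<lambda>s. s powr r) z :> l"
      and eq: "v powr r - u powr r = (v - u) * l"
    using MVT[OF assms(2)] by blast
  have "l = r * z powr (r - 1)"
    using DERIV_unique[OF z(3) deriv] z assms by auto
  with z eq show ?thesis by blast
qed

lemma powr_succ_diff_bounds:
  fixes u a :: real
  assumes "0 < u" "0 \<le> a" "a \<le> 1"
  shows "a * (u + 1) powr (a - 1) \<le> (u + 1) powr a - u powr a"
    and "(u + 1) powr a - u powr a \<le> a * u powr (a - 1)"
proof -
  obtain z where z: "u < z" "z < u + 1" "(u + 1) powr a - u powr a = a * z powr (a - 1)"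
    using powr_diff_mean_value[of u "u + 1" a] assms by auto
  have "(u + 1) powr (a - 1) \<le> z powr (a - 1)" "z powr (a - 1) \<le> u powr (a - 1)"
    using powr_mono2'[of "a - 1" z "u + 1"] powr_mono2'[of "a - 1" u z] z assms by auto
  with z assms show "a * (u + 1) powr (a - 1) \<le> (u + 1) powr a - u powr a"
    and "(u + 1) powr a - u powr a \<le> a * u powr (a - 1)"
    by (auto intro: mult_left_mono)
qed

lemma powr_succ_diff_bounds_neg:
  fixes u a :: real
  assumes "0 < u" "a \<le> 1"
  shows "(1 - a) * (u + 1) powr (a - 2) \<le> u powr (a - 1) - (u + 1) powr (a - 1)"
    and "u powr (a - 1) - (u + 1) powr (a - 1) \<le> (1 - a) * u powr (a - 2)"
proof -
  obtain z where z: "u < z" "z < u + 1"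
    and "(u + 1) powr (a - 1) - u powr (a - 1) = (a - 1) * z powr (a - 1 - 1)"
    using powr_diff_mean_value[of u "u + 1" "a - 1"] assms by auto
  then have eq: "u powr (a - 1) - (u + 1) powr (a - 1) = (1 - a) * z powr (a - 2)"
    by (simp add: algebra_simps)
  have "(u + 1) powr (a - 2) \<le> z powr (a - 2)" "z powr (a - 2) \<le> u powr (a - 2)"
    using powr_mono2'[of "a - 2" z "u + 1"] powr_mono2'[of "a - 2" u z] z assms by auto
  with eq assms show "(1 - a) * (u + 1) powr (a - 2) \<le> u powr (a - 1) - (u + 1) powr (a - 1)"
    and "u powr (a - 1) - (u + 1) powr (a - 1) \<le> (1 - a) * u powr (a - 2)"
    by (auto intro: mult_left_mono)
qed

lemma strict_mono_on_if_deriv_pos: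
  fixes f f' :: "real \<Rightarrow> real"
  assumes "convex S"
    and "\<And>x. x \<in> S \<Longrightarrow> (f has_real_derivative f' x) (at x)"
    and "\<And>x. x \<in> S \<Longrightarrow> 0 < f' x"
  shows "strict_mono_on S f"
proof (rule strict_mono_onI)
  fix r s assume rs: "r \<in> S" "s \<in> S" "r < s"
  have "closed_segment r s \<subseteq> S"
    using \<open>convex S\<close> rs by (simp add: convex_contains_segment)
  then have sub: "{r..s} \<subseteq> S"
    using rs by (simp add: closed_segment_eq_real_ivl)
  show "f r < f s"
  proof (rule DERIV_pos_imp_increasing_open[OF \<open>r < s\<close>])
    show "continuous_on {r..s} f"
      using sub assms(2) by (meson DERIV_isCont continuous_at_imp_continuous_on subsetD)
    show "\<exists>y. DERIV f x :> y \<and> y > 0" if "r < x" "x < s" for x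
      using that sub assms(2,3) by (meson atLeastAtMost_iff less_imp_le subsetD)
  qed
qed

lemma strict_antimono_on_if_deriv_neg:
  fixes f f' :: "real \<Rightarrow> real"
  assumes "convex S"
    and "\<And>x. x \<in> S \<Longrightarrow> (f has_real_derivative f' x) (at x)"
    and "\<And>x. x \<in> S \<Longrightarrow> f' x < 0"
  shows "strict_antimono_on S f"
proof -
  have "strict_mono_on S (\<lambda>x. - f x)"
    using assms by (intro strict_mono_on_if_deriv_pos[where f' = "\<lambda>x. - f' x"])
      (auto intro: DERIV_minus)
  then show ?thesis
    unfolding monotone_on_def by simp
qed

text \<open>For \<open>a = H - 1/2\<close>, \<open>hH a n\<close> is the derivative of \<open>g\<^sub>n\<close> divided by the positive factor
  \<open>a x\<^sup>-\<^sup>a\<^sup>-\<^sup>1\<close>.\<close>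

definition hH :: "real \<Rightarrow> real \<Rightarrow> real \<Rightarrow> real" where
  "hH a N x = x * ((N - 1 - x) powr (a - 1) - (N - x) powr (a - 1)) - ((N - x) powr a - (N - 1 - x) powr a)"

lemma gH_has_real_derivative:
  assumes "0 < x" "x < real n - 1"
  shows "(gH H n has_real_derivative (H - 1/2) * x powr (- H - 1/2) * hH (H - 1/2) (real n) x) (at x)"
proof -
  define a where "a = H - 1/2"
  have exponents: "H - 1/2 = a" "- H - 1/2 = - a - 1"
    by (simp_all add: a_def)
  have g: "gH H n = (\<lambda>x. x powr (- a) * ((real n - x) powr a - (real n - 1 - x) powr a))"
    by (auto simp: gH_def phiH_def a_def)
  have "((\<lambda>x. x powr (- a) * ((real n - x) powr a - (real n - 1 - x) powr a)) has_real_derivative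
      - a * x powr (- a - 1) * ((real n - x) powr a - (real n - 1 - x) powr a)
      + x powr (- a) * (a * (real n - 1 - x) powr (a - 1) - a * (real n - x) powr (a - 1))) (at x)"
    using assms by (auto intro!: derivative_eq_intros)
  moreover have "x powr (- a) = x * x powr (- a - 1)"
    using assms by (simp add: powr_diff)
  ultimately show ?thesis
    unfolding g exponents by (simp add: hH_def algebra_simps)
qed

lemma hH_has_real_derivative:
  assumes "0 \<le> x" "x < N - 1"
  shows "(hH a N has_real_derivative
     (1 - a) * ((N - 1 - x) powr (a - 1) - (N - x) powr (a - 1))
     + x * (1 - a) * ((N - 1 - x) powr (a - 2) - (N - x) powr (a - 2))) (at x)"
proof -
  have "hH a N = (\<lambda>x. x * ((N - 1 - x) powr (a - 1) - (N - x) powr (a - 1))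
      - ((N - x) powr a - (N - 1 - x) powr a))"
    by (simp add: hH_def fun_eq_iff)
  moreover have "((\<lambda>x. x * ((N - 1 - x) powr (a - 1) - (N - x) powr (a - 1))
      - ((N - x) powr a - (N - 1 - x) powr a)) has_real_derivative
     ((N - 1 - x) powr (a - 1) - (N - x) powr (a - 1))
     + x * ((1 - a) * (N - 1 - x) powr (a - 1 - 1) - (1 - a) * (N - x) powr (a - 1 - 1))
     - (a * (N - 1 - x) powr (a - 1) - a * (N - x) powr (a - 1))) (at x)"
    using assms by (auto intro!: derivative_eq_intros simp: algebra_simps)
  ultimately show ?thesis
    by (simp add: algebra_simps)
qed

lemma hH_strict_mono:
  assumes "0 < a" "a < 1"
  shows "strict_mono_on {0..<N - 1} (hH a N)"
proof (rule strict_mono_on_if_deriv_pos[OF _ hH_has_real_derivative])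
  fix x assume x: "x \<in> {0..<N - 1}"
  then have u: "0 < N - 1 - x" "N - 1 - x < N - x"
    by auto
  have "(N - x) powr (a - 1) < (N - 1 - x) powr (a - 1)"
    using u assms by (intro powr_less_mono2_neg) auto
  moreover have "(N - x) powr (a - 2) \<le> (N - 1 - x) powr (a - 2)"
    using u assms by (intro powr_mono2') auto
  ultimately show "0 < (1 - a) * ((N - 1 - x) powr (a - 1) - (N - x) powr (a - 1))
      + x * (1 - a) * ((N - 1 - x) powr (a - 2) - (N - x) powr (a - 2))"
    using assms x by (intro add_pos_nonneg mult_pos_pos mult_nonneg_nonneg) auto
qed auto

lemma hH_sign_iff:
  assumes "0 < a" "a < 1" "0 < z" "z < N - 1" "hH a N z = 0" "0 \<le> p" "p < N - 1"
  shows "hH a N p < 0 \<longleftrightarrow> p < z" and "0 < hH a N p \<longleftrightarrow> z < p"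
  using strict_mono_on_less[OF hH_strict_mono[OF assms(1,2), of N], of p z]
    strict_mono_on_less[OF hH_strict_mono[OF assms(1,2), of N], of z p] assms
  by auto

lemma hH_0_neg:
  assumes "0 < a" "1 < N"
  shows "hH a N 0 < 0"
  using powr_less_mono2[of a "N - 1" N] assms by (simp add: hH_def)

lemma hH_pos_near_end:
  assumes "0 < a" "a < 1/2" "2 \<le> N"
  shows "\<exists>x. 0 < x \<and> x < N - 1 \<and> 0 < hH a N x"
proof -
  \<comment> \<open>At distance \<open>s\<^sup>2 < 1\<close> from \<open>N - 1\<close> the singular term \<open>(s\<^sup>2)\<^sup>a\<^sup>-\<^sup>1 \<ge> 1/s\<close> dominates;
    this choice of \<open>s\<close> makes \<open>(x - a)/s > x\<close> for all \<open>x > 3/4\<close>.\<close>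
  define s where "s = (1 - 2 * a) / 2"
  define x where "x = N - 1 - s\<^sup>2"
  have s: "0 < s" "s < 1/2"
    using assms by (auto simp: s_def)
  then have s2: "0 < s\<^sup>2" "s\<^sup>2 < 1"
    using power_strict_mono[of s 1 2] by auto
  have x: "3/4 < x" "x < N - 1"
    using s s2 power_strict_mono[of s "1/2" 2] assms by (auto simp: x_def power2_eq_square)
  have "hH a N x = x * ((s\<^sup>2) powr (a - 1) - (s\<^sup>2 + 1) powr (a - 1)) - ((s\<^sup>2 + 1) powr a - (s\<^sup>2) powr a)"
    by (simp add: hH_def x_def algebra_simps)
  also have "\<dots> \<ge> x * ((s\<^sup>2) powr (a - 1) - 1) - a * (s\<^sup>2) powr (a - 1)"
  proof -
    have "(s\<^sup>2 + 1) powr (a - 1) \<le> 1"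
      using powr_mono2'[of "a - 1" 1 "s\<^sup>2 + 1"] assms s2 by auto
    then have "x * (s\<^sup>2 + 1) powr (a - 1) \<le> x"
      using mult_left_mono[of _ 1 x] x by simp
    moreover have "(s\<^sup>2 + 1) powr a - (s\<^sup>2) powr a \<le> a * (s\<^sup>2) powr (a - 1)"
      using powr_succ_diff_bounds(2)[of "s\<^sup>2" a] s2 assms by auto
    ultimately show ?thesis
      by (simp add: algebra_simps)
  qed
  finally have "(x - a) * (s\<^sup>2) powr (a - 1) - x \<le> hH a N x"
    by (simp add: algebra_simps)
  moreover have "(x - a) / s \<le> (x - a) * (s\<^sup>2) powr (a - 1)"
  proof -
    have "(s\<^sup>2) powr (- 1/2) \<le> (s\<^sup>2) powr (a - 1)"
      using assms s2 by (intro powr_mono') auto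
    moreover have "(s\<^sup>2) powr (- 1/2) = 1 / s"
      using s by (simp add: powr_minus_divide powr_half_sqrt[symmetric])
    ultimately show ?thesis
      using mult_left_mono[of "1 / s" _ "x - a"] x assms by simp
  qed
  moreover have "x < (x - a) / s"
  proof -
    have "x * s = x / 2 - a * x"
      by (simp add: s_def field_simps)
    moreover have "a * (3/4) < a * x"
      using x assms by (intro mult_strict_left_mono) auto
    ultimately have "x * s < x - a"
      using x assms by linarith
    then show ?thesis
      using s by (simp add: field_simps)
  qed
  ultimately show ?thesis
    using x by (intro exI[of _ x]) auto
qed

lemma hH_unique_zero:
  assumes "0 < a" "a < 1/2" "2 \<le> N"
  shows "\<exists>!x. 0 < x \<and> x < N - 1 \<and> hH a N x = 0"
proof -
  obtain q where q: "0 < q" "q < N - 1" "0 < hH a N q"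
    using hH_pos_near_end[OF assms] by blast
  have "continuous_on {0..q} (hH a N)"
    using q by (intro continuous_at_imp_continuous_on ballI DERIV_isCont[OF hH_has_real_derivative]) auto
  then obtain x where x: "0 \<le> x" "x \<le> q" "hH a N x = 0"
    using IVT'[of "hH a N" 0 0 q] hH_0_neg[of a N] q assms by auto
  moreover have "x \<noteq> 0"
    using x hH_0_neg[of a N] assms by auto
  moreover have "y = x" if "0 < y" "y < N - 1" "hH a N y = 0" for y
    using strict_mono_on_eqD[OF hH_strict_mono[of a N]] that x q assms by auto
  ultimately show ?thesis
    using q by (intro ex1I[of _ x]) auto
qed

lemma turning_point_unique:
  assumes "turning_point H n x" "turning_point H n y"
  shows "x = y"
proof -
  have False if "turning_point H n x" "turning_point H n y" "x < y" for x y
  proof -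
    define p where "p = x + (y - x) / 3"
    define q where "q = x + 2 * (y - x) / 3"
    have pq: "x < p" "p < q" "q < y"
      using \<open>x < y\<close> by (auto simp: p_def q_def field_simps)
    have "gH H n p < gH H n q"
      using that pq unfolding turning_point_def monotone_on_def by auto
    moreover have "gH H n q < gH H n p"
      using that pq unfolding turning_point_def monotone_on_def by auto
    ultimately show False
      by simp
  qed
  then show ?thesis
    using assms by (meson linorder_neqE)
qed

lemma turning_point_iff_hH_zero:
  assumes "1/2 < H" "H < 1" "1 < n"
  shows "turning_point H n x \<longleftrightarrow> 0 < x \<and> x < real n - 1 \<and> hH (H - 1/2) (real n) x = 0"
proof -
  define a where "a = H - 1/2"
  have a: "0 < a" "a < 1/2" "2 \<le> real n"
    using assms by (auto simp: a_def)
  let ?g' = "\<lambda>y. a * y powr (- H - 1/2) * hH a (real n) y"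
  have deriv: "(gH H n has_real_derivative ?g' y) (at y)" if "0 < y" "y < real n - 1" for y
    using gH_has_real_derivative[OF that] by (simp add: a_def)
  have zero_is_turning_point: "turning_point H n z"
    if z: "0 < z" "z < real n - 1" "hH a (real n) z = 0" for z
  proof -
    have sign: "?g' y < 0 \<longleftrightarrow> y < z" "0 < ?g' y \<longleftrightarrow> z < y"
      if "0 < y" "y < real n - 1" for y
      using hH_sign_iff[of a z "real n" y] that z a by (auto simp: mult_less_0_iff zero_less_mult_iff)
    have "strict_antimono_on {0<..<z} (gH H n)"
      using deriv sign z by (intro strict_antimono_on_if_deriv_neg[where f' = ?g']) auto
    moreover have "strict_mono_on {z<..<real n - 1} (gH H n)"
      using deriv sign z by (intro strict_mono_on_if_deriv_pos[where f' = ?g']) auto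
    ultimately show ?thesis
      using z by (simp add: turning_point_def)
  qed
  show ?thesis
  proof
    assume "turning_point H n x"
    moreover obtain z where "0 < z" "z < real n - 1" "hH a (real n) z = 0"
      using hH_unique_zero[OF a] by blast
    ultimately show "0 < x \<and> x < real n - 1 \<and> hH (H - 1/2) (real n) x = 0"
      using zero_is_turning_point turning_point_unique a_def by metis
  qed (use zero_is_turning_point a_def in auto)
qed

lemma hH_neg_if:
  assumes "0 < a" "a < 1" "0 < x" "0 < u" "x * (1 - a) * (u + 1) \<le> a * u\<^sup>2"
  shows "hH a (x + u + 1) x < 0"
proof -
  define U V where "U = u powr a" and "V = (u + 1) powr a"
  have UV: "0 < U" "U < V"
    using assms powr_less_mono2[of a u "u + 1"] by (auto simp: U_def V_def)
  have "hH a (x + u + 1) x = x * (u powr (a - 1) - (u + 1) powr (a - 1)) - ((u + 1) powr a - u powr a)"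
    by (simp add: hH_def add.commute add.left_commute)
  also have "\<dots> \<le> x * ((1 - a) * u powr (a - 2)) - a * (u + 1) powr (a - 1)"
    using powr_succ_diff_bounds_neg(2)[of u a] powr_succ_diff_bounds(1)[of u a] assms
    by (smt (verit) mult_left_mono)
  also have "\<dots> = x * (1 - a) * U / u\<^sup>2 - a * V / (u + 1)"
    using assms by (simp add: U_def V_def powr_diff power2_eq_square)
  also have "\<dots> < 0"
  proof -
    have "x * (1 - a) * (u + 1) * U < x * (1 - a) * (u + 1) * V"
      using assms UV by (intro mult_strict_left_mono) auto
    also have "\<dots> \<le> a * u\<^sup>2 * V"
      using assms UV by (intro mult_right_mono) auto
    finally have "x * (1 - a) * (u + 1) * U - a * u\<^sup>2 * V < 0"
      by simp
    moreover have "x * (1 - a) * U / u\<^sup>2 - a * V / (u + 1)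
        = (x * (1 - a) * (u + 1) * U - a * u\<^sup>2 * V) / (u\<^sup>2 * (u + 1))"
      using assms by (simp add: field_simps)
    ultimately show ?thesis
      using assms by (simp add: divide_neg_pos)
  qed
  finally show ?thesis .
qed

lemma hH_pos_if:
  assumes "0 < a" "a < 1" "0 < x" "0 < u" "a * (u + 1)\<^sup>2 \<le> x * (1 - a) * u"
  shows "0 < hH a (x + u + 1) x"
proof -
  define U V where "U = u powr a" and "V = (u + 1) powr a"
  have UV: "0 < U" "U < V"
    using assms powr_less_mono2[of a u "u + 1"] by (auto simp: U_def V_def)
  have "0 < x * (1 - a) * V / (u + 1)\<^sup>2 - a * U / u"
  proof -
    have "a * (u + 1)\<^sup>2 * U < a * (u + 1)\<^sup>2 * V"
      using assms UV by (intro mult_strict_left_mono) auto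
    also have "\<dots> \<le> x * (1 - a) * u * V"
      using assms UV by (intro mult_right_mono) auto
    finally show ?thesis
      using assms by (simp add: field_simps)
  qed
  also have "x * (1 - a) * V / (u + 1)\<^sup>2 - a * U / u
      = x * ((1 - a) * (u + 1) powr (a - 2)) - a * u powr (a - 1)"
    using assms by (simp add: U_def V_def powr_diff power2_eq_square)
  also have "\<dots> \<le> x * (u powr (a - 1) - (u + 1) powr (a - 1)) - ((u + 1) powr a - u powr a)"
    using powr_succ_diff_bounds_neg(1)[of u a] powr_succ_diff_bounds(2)[of u a] assms
    by (smt (verit) mult_left_mono)
  also have "\<dots> = hH a (x + u + 1) x"
    by (simp add: hH_def add.commute add.left_commute)
  finally show ?thesis .
qed

lemma eventually_hH_neg_below:
  assumes "0 < e" "e < a" "a < 1"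
  shows "\<forall>\<^sub>F N in at_top. hH a N ((a - e) * (N - 1)) < 0"
proof -
  define M where "M = (a - e) * (1 - a) / (e * (1 - a + e))"
  have "hH a N ((a - e) * (N - 1)) < 0" if N: "max 2 (M + 1) \<le> N" for N
  proof -
    define m where "m = N - 1"
    define b where "b = 1 - a + e"
    have m: "1 \<le> m" "M \<le> m" and b: "0 < b"
      using N assms by (auto simp: m_def b_def)
    have "(a - e) * (1 - a) \<le> e * b * m"
      using m assms b by (simp add: M_def b_def divide_le_eq mult.commute)
    moreover have "a * (b * m)\<^sup>2 - (a - e) * m * (1 - a) * (b * m + 1) = (e * b * m - (a - e) * (1 - a)) * m"
      unfolding b_def by (simp add: algebra_simps power2_eq_square)
    ultimately have "(a - e) * m * (1 - a) * (b * m + 1) \<le> a * (b * m)\<^sup>2"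
      using m by (smt (verit) mult_nonneg_nonneg)
    then have "hH a ((a - e) * m + b * m + 1) ((a - e) * m) < 0"
      using assms m b by (intro hH_neg_if) auto
    moreover have "(a - e) * m + b * m + 1 = N"
      by (simp add: m_def b_def algebra_simps)
    ultimately show ?thesis
      by (simp add: m_def)
  qed
  then show ?thesis
    by (rule eventually_at_top_linorderI)
qed

lemma eventually_hH_pos_above:
  assumes "0 < e" "0 < a" "a + e < 1"
  shows "\<forall>\<^sub>F N in at_top. 0 < hH a N ((a + e) * (N - 1))"
proof -
  define M where "M = (2 * a * (1 - a - e) + a) / ((1 - a - e) * e)"
  have "0 < hH a N ((a + e) * (N - 1))" if N: "max 2 (M + 1) \<le> N" for N
  proof -
    define m where "m = N - 1"
    define c where "c = 1 - a - e"
    have m: "1 \<le> m" "M \<le> m" and c: "0 < c"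
      using N assms by (auto simp: m_def c_def)
    have "2 * a * c + a \<le> c * e * m"
      using m assms c by (simp add: M_def c_def divide_le_eq mult.commute)
    then have "(2 * a * c + a) * m \<le> c * e * m * m"
      using m by (intro mult_right_mono) auto
    moreover have "a \<le> a * m"
      using m assms by simp
    moreover have "(a + e) * m * (1 - a) * (c * m) - a * (c * m + 1)\<^sup>2 = c * e * m * m - 2 * a * c * m - a"
      unfolding c_def by (simp add: algebra_simps power2_eq_square)
    ultimately have "a * (c * m + 1)\<^sup>2 \<le> (a + e) * m * (1 - a) * (c * m)"
      by (simp add: algebra_simps)
    then have "0 < hH a ((a + e) * m + c * m + 1) ((a + e) * m)"
      using assms m c by (intro hH_pos_if) auto
    moreover have "(a + e) * m + c * m + 1 = N"
      by (simp add: m_def c_def algebra_simps)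
    ultimately show ?thesis
      by (simp add: m_def)
  qed
  then show ?thesis
    by (rule eventually_at_top_linorderI)
qed

lemma hH_zero_ratio_tendsto:
  assumes "0 < a" "a < 1"
    and zero: "\<And>n. 1 < n \<Longrightarrow> 0 < z n \<and> z n < real n - 1 \<and> hH a (real n) (z n) = 0"
  shows "(\<lambda>n. z n / (real n - 1)) \<longlonglongrightarrow> a"
proof (rule order_tendstoI)
  fix b assume "b < a"
  define e where "e = min (a - b) a / 2"
  have "0 < min (a - b) a" "min (a - b) a \<le> a - b" "min (a - b) a \<le> a"
    using \<open>b < a\<close> assms(1) by auto
  with e_def have e: "0 < e" "e < a" "b \<le> a - e"
    by auto
  have "\<forall>\<^sub>F N in at_top. 2 < N \<and> hH a N ((a - e) * (N - 1)) < 0"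
    using eventually_gt_at_top eventually_hH_neg_below[OF e(1,2) assms(2)] by (rule eventually_conj)
  then show "\<forall>\<^sub>F n in sequentially. b < z n / (real n - 1)"
  proof (rule eventually_compose_filterlim[OF _ filterlim_real_sequentially, THEN eventually_mono])
    fix n assume n: "2 < real n \<and> hH a (real n) ((a - e) * (real n - 1)) < 0"
    then have "(a - e) * (real n - 1) < z n"
      using hH_sign_iff(1)[of a "z n" "real n" "(a - e) * (real n - 1)"] zero[of n] e assms by simp
    then have "a - e < z n / (real n - 1)"
      using n by (simp add: field_simps)
    then show "b < z n / (real n - 1)"
      using e by linarith
  qed
next
  fix b assume "a < b"
  define e where "e = min (b - a) (1 - a) / 2"
  have "0 < min (b - a) (1 - a)" "min (b - a) (1 - a) \<le> b - a" "min (b - a) (1 - a) \<le> 1 - a"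
    using \<open>a < b\<close> assms(2) by auto
  with e_def have e: "0 < e" "a + e < 1" "a + e \<le> b"
    by auto
  have "\<forall>\<^sub>F N in at_top. 2 < N \<and> 0 < hH a N ((a + e) * (N - 1))"
    using eventually_gt_at_top eventually_hH_pos_above[OF e(1) assms(1) e(2)] by (rule eventually_conj)
  then show "\<forall>\<^sub>F n in sequentially. z n / (real n - 1) < b"
  proof (rule eventually_compose_filterlim[OF _ filterlim_real_sequentially, THEN eventually_mono])
    fix n assume n: "2 < real n \<and> 0 < hH a (real n) ((a + e) * (real n - 1))"
    moreover have "(a + e) * (real n - 1) < real n - 1"
      using mult_strict_right_mono[of "a + e" 1 "real n - 1"] n e by simp
    ultimately have "z n < (a + e) * (real n - 1)"
      using hH_sign_iff(2)[of a "z n" "real n" "(a + e) * (real n - 1)"] zero[of n] e assms by simp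
    then have "z n / (real n - 1) < a + e"
      using n by (simp add: field_simps)
    then show "z n / (real n - 1) < b"
      using e by linarith
  qed
qed

theorem lemmaA1:
  fixes H :: real
  assumes "1/2 < H" and "H < 1"
  shows "(\<forall>n::nat. n > 1 \<longrightarrow> (\<exists>!x. turning_point H n x)) \<and>
         ((\<lambda>n. (THE x. turning_point H n x) / (real n - 1)) \<longlongrightarrow> H - 1/2) sequentially"
proof -
  define z where "z n = (THE x. turning_point H n x)" for n
  have tp: "turning_point H n x \<longleftrightarrow> 0 < x \<and> x < real n - 1 \<and> hH (H - 1/2) (real n) x = 0"
    if "1 < n" for n x
    using turning_point_iff_hH_zero[OF assms that] .
  have unique: "\<exists>!x. turning_point H n x" if "1 < n" for n
    using hH_unique_zero[of "H - 1/2" "real n"] assms that tp[OF that] by auto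
  have "0 < z n \<and> z n < real n - 1 \<and> hH (H - 1/2) (real n) (z n) = 0" if "1 < n" for n
    using theI'[OF unique[OF that]] tp[OF that] by (simp add: z_def)
  then have "(\<lambda>n. z n / (real n - 1)) \<longlonglongrightarrow> H - 1/2"
    using assms by (intro hH_zero_ratio_tendsto) auto
  then show ?thesis
    using unique unfolding z_def by blast
qed

end
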